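(* Let $k,m,t$ be positive integers with $m+t\le k$ and let $q$ be a prime power. Let $B$ be the bipartite graph whose left (user) vertex set is the set $\mathbb{V}$ of all $t$-dimensional subspaces of $\mathbb{F}_q^k$, whose right (subfile) vertex set is the set $\mathbb{X}$ of all $(m+t)$-dimensional subspaces of $\mathbb{F}_q^k$, and in which $V\in\mathbb{V}$ is adjacent to $X\in\mathbb{X}$ if and only if $V\subseteq X$. Then $B$ is a $(K,F,D)$ bipartite caching graph (for some $D$) with $K=\binom{k}{t}_q$ and $F=\binom{k}{m+t}_q$, and $B$ admits an induced matching cover consisting of $S=\binom{k}{m}_q$ induced matchings each having $g=\binom{k-m}{t}_q$ edges. Consequently (for a library of $N\ge K$ files) it defines a coded caching scheme with $K=\binom{k}{t}_q$ users, subpacketization $F=\binom{k}{m+t}_q$, cache fraction $$\frac{M}{N}=1-\frac{\binom{k-t}{m}_q}{\binom{k}{m+t}_q},$$ rate $R=\binom{k}{m}_q\big/\binom{k}{m+t}_q$, and global caching gain $\gamma=\binom{k-m}{t}_q$.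
   Context: For a prime power $q$ and integers $0\le b\le a$, the Gaussian binomial coefficient is $\binom{a}{b}_q=\frac{(q^a-1)(q^{a-1}-1)\cdots(q^{a-b+1}-1)}{(q^b-1)\cdots(q-1)}$ (with $\binom{a}{0}_q=1$); it equals the number of $b$-dimensional subspaces of an $a$-dimensional vector space over $\mathbb{F}_q$. Coded caching setup: a server holds $N$ files $W_1,\dots,W_N$ and is connected by an error-free broadcast link to $K$ users, each having a cache able to store $M$ files; it is assumed throughout that $N\ge K$. Each file is split into $F$ equal-size subfiles $W_{i,f}$, $f\in\mathcal{F}$, $|\mathcal{F}|=F$ ($F$ is the subpacketization). Caching is done before demands are known and is symmetric: for every user $k$ and index $f$, user $k$ caches either $W_{i,f}$ for all $i\in[N]$ or for no $i$. In the delivery phase every user demands one file and the server broadcasts transmissions, each of the size of one subfile, so that every user can recover its demanded file from its cache and the transmissions, for every demand vector. The rate is $R=(\text{number of transmissions})/F$ and the global caching gain is $\gamma=K(1-M/N)/R$. A $(K,F,D)$ bipartite caching graph is a bipartite graph with $K$ left (user) vertices and $F$ right (subfile) vertices in which every left vertex has degree $D$; it defines the symmetric caching scheme in which user $k$ does not cache the subfiles with index $f$ exactly when $\{k,f\}$ is an edge (so $M/N=1-D/F$). An induced matching of a bipartite graph $B$ is a set $\mathcal{C}\subseteq E(B)$ such that for any two distinct edges $\{k_1,f_1\},\{k_2,f_2\}\in\mathcal{C}$ we have $k_1\ne k_2$, $f_1\ne f_2$ and $\{k_1,f_2\},\{k_2,f_1\}\notin E(B)$. An induced matching cover of $B$ is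 a set of induced matchings that partitions $E(B)$. (Each induced matching $\{\{k_i,f_i\}\}_{i}$ yields the transmission $\sum_i W_{d_{k_i},f_i}$, where $W_{d_k}$ is the file demanded by user $k$.) *)

theory Defs
  imports "HOL-Analysis.Analysis"
begin

text \<open>Gaussian binomial coefficient [a choose b]_q, given by the product formula
  (the quotient is exact for 0 <= b <= a and q >= 2).\<close>
definition gauss_binom :: "nat \<Rightarrow> nat \<Rightarrow> nat \<Rightarrow> nat" where
  "gauss_binom q a b =
     (\<Prod>i<b. q ^ (a - i) - 1) div (\<Prod>i<b. q ^ (i + 1) - 1)"

definition caching_graph ::
  "nat \<Rightarrow> nat \<Rightarrow> nat \<Rightarrow> 'u set \<Rightarrow> 'f set \<Rightarrow> ('u \<times> 'f) set \<Rightarrow> bool" where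
  "caching_graph K F D L R E \<longleftrightarrow>
     finite L \<and> finite R \<and> card L = K \<and> card R = F \<and> E \<subseteq> L \<times> R \<and>
     (\<forall>k\<in>L. card {f. (k, f) \<in> E} = D)"

definition induced_matching :: "('u \<times> 'f) set \<Rightarrow> ('u \<times> 'f) set \<Rightarrow> bool" where
  "induced_matching E C \<longleftrightarrow> C \<subseteq> E \<and>
     (\<forall>k1 f1 k2 f2. (k1, f1) \<in> C \<longrightarrow> (k2, f2) \<in> C \<longrightarrow> (k1, f1) \<noteq> (k2, f2) \<longrightarrow>
        k1 \<noteq> k2 \<and> f1 \<noteq> f2 \<and> (k1, f2) \<notin> E \<and> (k2, f1) \<notin> E)"

definition induced_matching_cover :: "('u \<times> 'f) set \<Rightarrow> ('u \<times> 'f) set set \<Rightarrow> bool" where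
  "induced_matching_cover E Cs \<longleftrightarrow>
     (\<forall>C\<in>Cs. induced_matching E C \<and> C \<noteq> {}) \<and> \<Union>Cs = E \<and>
     (\<forall>C1\<in>Cs. \<forall>C2\<in>Cs. C1 \<noteq> C2 \<longrightarrow> C1 \<inter> C2 = {})"

text \<open>Parameters of the coded caching scheme defined by a (K,F,D) caching graph with
  an induced matching cover of S matchings: M/N = 1 - D/F, R = S/F,
  gamma = K (1 - M/N) / R.\<close>
definition cache_fraction :: "nat \<Rightarrow> nat \<Rightarrow> real" where
  "cache_fraction F D = 1 - real D / real F"

definition scheme_rate :: "nat \<Rightarrow> nat \<Rightarrow> real" where
  "scheme_rate F S = real S / real F"

definition caching_gain :: "nat \<Rightarrow> nat \<Rightarrow> nat \<Rightarrow> nat \<Rightarrow> real" where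
  "caching_gain K F D S = real K * (1 - cache_fraction F D) / scheme_rate F S"

end

(*
  Over a field with q elements a d-dimensional subspace has q^d vectors. Counting the lists of r
  vectors of A that extend V independently, grouped by the subspace Z they span together with V,
  shows that the subspaces Z with V <= Z <= A, dim Z = dim V + r and Z meeting Y exactly in V
  (where V <= Y <= A) number [dim A - dim V, r]_q when Y = V, and q^((dim Y - dim V) r) when
  dim Y + r = dim A. The first count gives K, F and D.

  For the cover, relate each edge (V, X) to the pairs (V, U) with dim U = k - m, V <= U and
  U meeting X exactly in V. By the second count both sides of this relation are
  q^(m (k - m - t))-regular, so Hall's theorem gives a bijection between the edges and the
  flags V <= U. The edges sent to flags with a fixed U form an induced matching, since V <= X'
  forces V <= X' /\ U = V'; there are [k - m, t]_q of them, and [k, k - m]_q = [k, m]_q choices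
  of U. Double counting the edges finally gives K D = S g, i.e. the caching gain g.
*)
theory Submission
  imports Defs
begin

section \<open>Hall's marriage theorem\<close>

lemma hall_condition_Diff_critical:
  assumes "finite A" "\<And>a. a \<in> A \<Longrightarrow> finite (N a)"
    and hall: "\<And>T. T \<subseteq> A \<Longrightarrow> card T \<le> card (\<Union>(N ` T))"
    and "S \<subseteq> A" and critical: "card (\<Union>(N ` S)) = card S"
    and "T \<subseteq> A - S"
  shows "card T \<le> card (\<Union>a\<in>T. N a - \<Union>(N ` S))"
proof -
  have "finite S" "finite T" using assms(1,4,6) finite_subset by blast+
  have "card T + card S = card (T \<union> S)"
    using \<open>finite S\<close> \<open>finite T\<close> assms(6) by (intro card_Un_disjoint[symmetric]) auto
  also have "\<dots> \<le> card (\<Union>(N ` (T \<union> S)))" using assms(4,6) by (intro hall) auto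
  also have "\<Union>(N ` (T \<union> S)) = (\<Union>a\<in>T. N a - \<Union>(N ` S)) \<union> \<Union>(N ` S)" by auto
  also have "card \<dots> \<le> card (\<Union>a\<in>T. N a - \<Union>(N ` S)) + card (\<Union>(N ` S))"
    by (rule card_Un_le)
  finally show ?thesis using critical by linarith
qed

lemma hall_condition_Diff_singleton:
  assumes "finite A" "\<And>a. a \<in> A \<Longrightarrow> finite (N a)"
    and no_critical: "\<And>T. T \<noteq> {} \<Longrightarrow> T \<subset> A \<Longrightarrow> card T < card (\<Union>(N ` T))"
    and "a \<in> A" "T \<subseteq> A - {a}"
  shows "card T \<le> card (\<Union>x\<in>T. N x - {b})"
proof (cases "T = {}")
  case True
  then show ?thesis by simp
next
  case False
  have "T \<subset> A" using assms(4,5) by auto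
  then have "card T < card (\<Union>(N ` T))" using no_critical False by blast
  moreover have "(\<Union>x\<in>T. N x - {b}) = \<Union>(N ` T) - {b}" by auto
  ultimately show ?thesis by (auto simp: card_Diff_singleton_if)
qed

lemma distinct_representatives_Un:
  assumes "S \<subseteq> A" "inj_on f1 S" "\<forall>a\<in>S. f1 a \<in> N a"
    and "inj_on f2 (A - S)" "\<forall>a\<in>A - S. f2 a \<in> N a - \<Union>(N ` S)"
  defines "f \<equiv> \<lambda>a. if a \<in> S then f1 a else f2 a"
  shows "inj_on f A \<and> (\<forall>a\<in>A. f a \<in> N a)"
proof
  have "inj_on f S" by (rule inj_on_cong[THEN iffD2, OF _ assms(2)]) (simp add: f_def)
  moreover have "inj_on f (A - S)" by (rule inj_on_cong[THEN iffD2, OF _ assms(4)]) (simp add: f_def)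
  moreover have "f ` S \<inter> f ` (A - S) = {}" using assms(3,5) by (auto simp: f_def)
  moreover have "S - (A - S) = S" "(A - S) - S = A - S" by auto
  ultimately have "inj_on f (S \<union> (A - S))" unfolding inj_on_Un by simp
  then show "inj_on f A" using assms(1) by (simp add: Un_absorb1)
  show "\<forall>a\<in>A. f a \<in> N a" using assms(3,5) by (simp add: f_def)
qed

lemma distinct_representatives_insert:
  assumes "inj_on f (A - {a})" "\<forall>x\<in>A - {a}. f x \<in> N x - {b}" "a \<in> A" "b \<in> N a"
  shows "inj_on (f(a := b)) A \<and> (\<forall>x\<in>A. (f(a := b)) x \<in> N x)"
  using assms by (auto simp: inj_on_def)

theorem hall_marriage:
  assumes "finite A" "\<And>a. a \<in> A \<Longrightarrow> finite (N a)"
    and "\<And>S. S \<subseteq> A \<Longrightarrow> card S \<le> card (\<Union>(N ` S))"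
  shows "\<exists>f. inj_on f A \<and> (\<forall>a\<in>A. f a \<in> N a)"
  using assms
proof (induction "card A" arbitrary: A N rule: less_induct)
  case less
  note fin = less.prems(1,2) and hall = less.prems(3)
  consider (empty) "A = {}"
    | (critical) S where "S \<noteq> {}" "S \<subset> A" "card (\<Union>(N ` S)) = card S"
    | (no_critical) "A \<noteq> {}" "\<And>S. S \<noteq> {} \<Longrightarrow> S \<subset> A \<Longrightarrow> card S < card (\<Union>(N ` S))"
    using hall le_neq_implies_less psubset_imp_subset by metis
  then show ?case
  proof cases
    case empty
    then show ?thesis by simp
  next
    case critical
    have "finite S" using critical(2) fin(1) finite_subset by blast
    have "card S < card A" using fin(1) critical(2) by (rule psubset_card_mono)
    moreover have "0 < card S" using \<open>finite S\<close> critical(1) by (simp add: card_gt_0_iff)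
    ultimately have "card (A - S) < card A"
      using card_Diff_subset[OF \<open>finite S\<close> psubset_imp_subset[OF critical(2)]] by linarith
    have "\<exists>f. inj_on f S \<and> (\<forall>a\<in>S. f a \<in> N a)"
    proof (rule less.hyps[OF \<open>card S < card A\<close> \<open>finite S\<close>])
      show "finite (N a)" if "a \<in> S" for a using that critical(2) fin(2) by blast
      show "card T \<le> card (\<Union>(N ` T))" if "T \<subseteq> S" for T using that critical(2) hall by blast
    qed
    moreover have "\<exists>f. inj_on f (A - S) \<and> (\<forall>a\<in>A - S. f a \<in> N a - \<Union>(N ` S))"
    proof (rule less.hyps[OF \<open>card (A - S) < card A\<close>])
      show "finite (A - S)" using fin(1) by simp
      show "finite (N a - \<Union>(N ` S))" if "a \<in> A - S" for a using that fin(2) by simp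
      show "card T \<le> card (\<Union>a\<in>T. N a - \<Union>(N ` S))" if "T \<subseteq> A - S" for T
        using hall_condition_Diff_critical[OF fin hall psubset_imp_subset[OF critical(2)] critical(3) that] .
    qed
    ultimately obtain f1 f2 where "inj_on f1 S" "\<forall>a\<in>S. f1 a \<in> N a"
      and "inj_on f2 (A - S)" "\<forall>a\<in>A - S. f2 a \<in> N a - \<Union>(N ` S)" by blast
    from distinct_representatives_Un[OF psubset_imp_subset[OF critical(2)] this] show ?thesis by blast
  next
    case no_critical
    then obtain a where "a \<in> A" by blast
    then have "card {a} \<le> card (N a)" using hall[of "{a}"] by simp
    then have "N a \<noteq> {}" by auto
    then obtain b where "b \<in> N a" by blast
    have "card (A - {a}) < card A" using fin(1) \<open>a \<in> A\<close> by (rule card_Diff1_less)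
    then have "\<exists>f. inj_on f (A - {a}) \<and> (\<forall>x\<in>A - {a}. f x \<in> N x - {b})"
    proof (rule less.hyps)
      show "finite (A - {a})" using fin(1) by simp
      show "finite (N x - {b})" if "x \<in> A - {a}" for x using that fin(2) by simp
      show "card T \<le> card (\<Union>x\<in>T. N x - {b})" if "T \<subseteq> A - {a}" for T
        using hall_condition_Diff_singleton[OF fin no_critical(2) \<open>a \<in> A\<close> that] .
    qed
    then obtain f where "inj_on f (A - {a})" "\<forall>x\<in>A - {a}. f x \<in> N x - {b}" by blast
    from distinct_representatives_insert[OF this \<open>a \<in> A\<close> \<open>b \<in> N a\<close>] show ?thesis by blast
  qed
qed

lemma biregular_perfect_matching:
  assumes "finite A" "finite B" and N_B: "\<And>a. a \<in> A \<Longrightarrow> N a \<subseteq> B"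
    and deg_A: "\<And>a. a \<in> A \<Longrightarrow> card (N a) = c"
    and deg_B: "\<And>b. b \<in> B \<Longrightarrow> card {a \<in> A. b \<in> N a} = c"
    and "0 < c"
  shows "\<exists>f. bij_betw f A B \<and> (\<forall>a\<in>A. f a \<in> N a)"
proof -
  have fin_N: "finite (N a)" if "a \<in> A" for a using that N_B \<open>finite B\<close> finite_subset by blast
  have hall: "card S \<le> card (\<Union>(N ` S))" if "S \<subseteq> A" for S
  proof -
    let ?NS = "\<Union>(N ` S)"
    have "finite S" "finite ?NS" using that assms(1,2) N_B by (auto intro: finite_subset)
    have "c * card S = (\<Sum>a\<in>S. card (N a))" using that deg_A by (simp add: subset_iff)
    also have "\<dots> = (\<Sum>a\<in>S. card {b \<in> ?NS. b \<in> N a})"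
      by (intro sum.cong arg_cong[where f = card]) auto
    also have "\<dots> = (\<Sum>b\<in>?NS. card {a \<in> S. b \<in> N a})"
      using \<open>finite S\<close> \<open>finite ?NS\<close> by (rule sum_multicount_gen) simp
    also have "\<dots> \<le> (\<Sum>b\<in>?NS. card {a \<in> A. b \<in> N a})"
      using that assms(1) by (intro sum_mono card_mono) auto
    also have "\<dots> = (\<Sum>b\<in>?NS. c)"
      using that N_B by (intro sum.cong refl deg_B) blast
    also have "\<dots> = c * card ?NS" by simp
    finally show ?thesis using \<open>0 < c\<close> by simp
  qed
  obtain f where inj: "inj_on f A" and f_N: "\<forall>a\<in>A. f a \<in> N a"
    using hall_marriage[OF \<open>finite A\<close> fin_N hall] by blast
  have "c * card A = (\<Sum>a\<in>A. card (N a))" using deg_A by simp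
  also have "\<dots> = (\<Sum>a\<in>A. card {b \<in> B. b \<in> N a})"
    using N_B by (intro sum.cong arg_cong[where f = card]) auto
  also have "\<dots> = c * card B" using assms(1,2) deg_B by (intro sum_multicount) auto
  finally have "card A = card B" using \<open>0 < c\<close> by simp
  moreover have "f ` A \<subseteq> B" using f_N N_B by blast
  ultimately have "f ` A = B" using inj \<open>finite B\<close> by (simp add: card_image card_subset_eq)
  then show ?thesis using inj f_N by (auto simp: bij_betw_def)
qed

section \<open>Induced matching covers\<close>

lemma card_fibre_bij_betw:
  assumes "bij_betw f A B"
  shows "card {a \<in> A. g (f a) = y} = card {b \<in> B. g b = y}"
proof -
  have "f ` {a \<in> A. g (f a) = y} = {b \<in> B. g b = y}"
    using assms by (auto simp: bij_betw_def)
  moreover have "inj_on f {a \<in> A. g (f a) = y}"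
    using bij_betw_imp_inj_on[OF assms] by (rule inj_on_subset) blast
  ultimately show ?thesis by (metis card_image)
qed

lemma induced_matching_cover_fibres:
  assumes "g ` E \<subseteq> I"
    and "\<And>i. i \<in> I \<Longrightarrow> induced_matching E {e \<in> E. g e = i} \<and> {e \<in> E. g e = i} \<noteq> {}"
  shows "induced_matching_cover E ((\<lambda>i. {e \<in> E. g e = i}) ` I)"
    and "card ((\<lambda>i. {e \<in> E. g e = i}) ` I) = card I"
proof -
  show "induced_matching_cover E ((\<lambda>i. {e \<in> E. g e = i}) ` I)"
    unfolding induced_matching_cover_def
  proof (intro conjI ballI impI)
    fix C assume "C \<in> (\<lambda>i. {e \<in> E. g e = i}) ` I"
    then obtain i where "i \<in> I" "C = {e \<in> E. g e = i}" by blast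
    then show "induced_matching E C" "C \<noteq> {}" using assms(2) by simp_all
  next
    show "\<Union>((\<lambda>i. {e \<in> E. g e = i}) ` I) = E" using assms(1) by auto
  next
    fix C1 C2 assume "C1 \<in> (\<lambda>i. {e \<in> E. g e = i}) ` I" "C2 \<in> (\<lambda>i. {e \<in> E. g e = i}) ` I"
      and "C1 \<noteq> C2"
    then show "C1 \<inter> C2 = {}" by auto
  qed
  have "inj_on (\<lambda>i. {e \<in> E. g e = i}) I"
  proof (rule inj_onI)
    fix i j assume "i \<in> I" "j \<in> I" and eq: "{e \<in> E. g e = i} = {e \<in> E. g e = j}"
    then obtain e where "e \<in> {e \<in> E. g e = i}" using assms(2) by blast
    then show "i = j" using eq by blast
  qed
  then show "card ((\<lambda>i. {e \<in> E. g e = i}) ` I) = card I" by (rule card_image)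
qed

lemma card_edges_caching_graph:
  assumes "caching_graph K F D L R E"
  shows "card E = K * D"
proof -
  have fin_L: "finite L" and E_sub: "E \<subseteq> L \<times> R" and "finite E"
    using assms unfolding caching_graph_def by (auto intro: finite_subset)
  have "E = (SIGMA k:L. {f. (k, f) \<in> E})" using E_sub by auto
  then have "card E = card (SIGMA k:L. {f. (k, f) \<in> E})" by (rule arg_cong)
  also have "\<dots> = (\<Sum>k\<in>L. card {f. (k, f) \<in> E})"
  proof (rule card_SigmaI[OF fin_L], rule ballI)
    fix k
    have "{f. (k, f) \<in> E} \<subseteq> snd ` E" by force
    then show "finite {f. (k, f) \<in> E}" using \<open>finite E\<close> by (rule finite_subset[OF _ finite_imageI])
  qed
  also have "\<dots> = K * D" using assms by (simp add: caching_graph_def)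
  finally show ?thesis .
qed

lemma card_induced_matching_cover:
  assumes "induced_matching_cover E Cs" "finite E"
  shows "card E = sum card Cs"
proof -
  have "\<Union>Cs = E" "pairwise disjnt Cs"
    using assms(1) unfolding induced_matching_cover_def pairwise_def disjnt_def by blast+
  moreover have "finite C" if "C \<in> Cs" for C
    using that assms unfolding induced_matching_cover_def by (auto intro: finite_subset)
  ultimately show ?thesis using card_Union_disjoint by metis
qed

lemma caching_gain_of_cover:
  assumes graph: "caching_graph K F D L R E" and cover: "induced_matching_cover E Cs"
    and "card Cs = S" "\<forall>C\<in>Cs. card C = g" "0 < F" "0 < S"
  shows "caching_gain K F D S = g"
proof -
  have "finite E" using graph unfolding caching_graph_def by (auto intro: finite_subset)
  have "K * D = sum card Cs"
    using card_edges_caching_graph[OF graph] card_induced_matching_cover[OF cover \<open>finite E\<close>] by simp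
  also have "\<dots> = S * g" using assms(3,4) by simp
  finally have "real K * real D = real S * real g" by (metis of_nat_mult)
  then show ?thesis using assms(5,6)
    by (simp add: caching_gain_def cache_fraction_def scheme_rate_def field_simps)
qed

section \<open>Gaussian binomial coefficients\<close>

definition q_factorial :: "nat \<Rightarrow> nat \<Rightarrow> nat" where
  "q_factorial q r = (\<Prod>i<r. q ^ (i + 1) - 1)"

lemma q_factorial_pos:
  assumes "2 \<le> q"
  shows "0 < q_factorial q r"
proof -
  have "0 < q ^ (i + 1) - 1" for i
  proof -
    have "q ^ 1 \<le> q ^ (i + 1)" using assms by (intro power_increasing) auto
    then show ?thesis using assms unfolding power_one_right by linarith
  qed
  then show ?thesis unfolding q_factorial_def by (intro prod_pos) simp
qed

lemma prod_pow_diff_shift: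
  fixes q :: nat
  shows "(\<Prod>i<r. q ^ (b + s) - q ^ (b + i)) = q ^ (b * r) * (\<Prod>i<r. q ^ s - q ^ i)"
proof -
  have "(\<Prod>i<r. q ^ (b + s) - q ^ (b + i)) = (\<Prod>i<r. q ^ b * (q ^ s - q ^ i))"
    by (simp add: power_add diff_mult_distrib2)
  also have "\<dots> = q ^ (b * r) * (\<Prod>i<r. q ^ s - q ^ i)"
    by (simp add: prod.distrib power_mult)
  finally show ?thesis .
qed

lemma prod_pow_diff_factor:
  fixes q :: nat
  assumes "r \<le> s"
  shows "(\<Prod>i<r. q ^ s - q ^ i) = (\<Prod>i<r. q ^ i) * (\<Prod>i<r. q ^ (s - i) - 1)"
proof -
  have "q ^ s - q ^ i = q ^ i * (q ^ (s - i) - 1)" if "i < r" for i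
  proof -
    have "i + (s - i) = s" using that assms by simp
    then have "q ^ s = q ^ i * q ^ (s - i)" by (metis power_add)
    then show ?thesis by (simp only: diff_mult_distrib2 mult_1_right)
  qed
  then have "(\<Prod>i<r. q ^ s - q ^ i) = (\<Prod>i<r. q ^ i * (q ^ (s - i) - 1))"
    by (intro prod.cong) simp_all
  then show ?thesis by (simp only: prod.distrib)
qed

lemma prod_pow_diff_mult_q_factorial:
  assumes "j \<le> k"
  shows "(\<Prod>i<j. q ^ (k - i) - 1) * q_factorial q (k - j) = q_factorial q k"
proof -
  define f where "f i = q ^ (i + 1) - (1::nat)" for i
  have "q_factorial q k = (\<Prod>i<k. f (k - Suc i))"
    unfolding q_factorial_def f_def by (rule prod.nat_diff_reindex[symmetric])
  also have "\<dots> = (\<Prod>i<j. f (k - Suc i)) * (\<Prod>i\<in>{j..<k}. f (k - Suc i))"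
    using assms by (metis prod.atLeastLessThan_concat atLeast0LessThan zero_le)
  also have "(\<Prod>i\<in>{j..<k}. f (k - Suc i)) = (\<Prod>i\<in>{0..<k - j}. f (k - Suc (i + j)))"
    using prod.shift_bounds_nat_ivl[of "\<lambda>i. f (k - Suc i)" 0 j "k - j"] assms by simp
  also have "\<dots> = (\<Prod>i<k - j. f (k - j - Suc i))"
    by (simp add: atLeast0LessThan ac_simps)
  also have "\<dots> = q_factorial q (k - j)"
    unfolding q_factorial_def f_def by (rule prod.nat_diff_reindex)
  also have "(\<Prod>i<j. f (k - Suc i)) = (\<Prod>i<j. q ^ (k - i) - 1)"
    using assms by (intro prod.cong) (auto simp: f_def Suc_diff_Suc)
  finally show ?thesis by simp
qed

lemma prod_pow_diff_self: "(\<Prod>i<r. q ^ r - q ^ i) = (\<Prod>i<r. q ^ i) * q_factorial q r"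
  using prod_pow_diff_factor[of r r q] prod_pow_diff_mult_q_factorial[of r r q]
  by (simp add: q_factorial_def)

lemma q_power_from_prod_pow_diff:
  fixes q :: nat
  assumes "2 \<le> q"
    and "N * (\<Prod>i<r. q ^ (b + r) - q ^ (b + i)) = (\<Prod>i<r. q ^ (e + b + r) - q ^ (e + b + i))"
  shows "N = q ^ (e * r)"
proof -
  define P where "P = (\<Prod>i<r. q ^ r - q ^ i)"
  have "q ^ i < q ^ r" if "i < r" for i using assms(1) that by (intro power_strict_increasing) auto
  then have "0 < P" unfolding P_def by (intro prod_pos) simp
  have "N * (q ^ (b * r) * P) = N * (\<Prod>i<r. q ^ (b + r) - q ^ (b + i))"
    by (simp only: P_def prod_pow_diff_shift)
  also have "\<dots> = (\<Prod>i<r. q ^ (e + b + r) - q ^ (e + b + i))" by (rule assms(2))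
  also have "\<dots> = q ^ ((e + b) * r) * P" by (simp only: P_def prod_pow_diff_shift)
  also have "\<dots> = q ^ (e * r) * (q ^ (b * r) * P)" by (simp add: add_mult_distrib power_add)
  finally show ?thesis using \<open>0 < P\<close> assms(1) by simp
qed

lemma q_binomial_from_prod_pow_diff:
  assumes "2 \<le> q" "r \<le> s"
    and "N * (\<Prod>i<r. q ^ (b + r) - q ^ (b + i)) = (\<Prod>i<r. q ^ (b + s) - q ^ (b + i))"
  shows "N * q_factorial q r = (\<Prod>i<r. q ^ (s - i) - 1)"
proof -
  have "N * (\<Prod>i<r. q ^ r - q ^ i) = (\<Prod>i<r. q ^ s - q ^ i)"
    using assms(1,3) by (simp add: prod_pow_diff_shift)
  then have "(\<Prod>i<r. q ^ i) * (N * q_factorial q r) = (\<Prod>i<r. q ^ i) * (\<Prod>i<r. q ^ (s - i) - 1)"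
    by (simp add: prod_pow_diff_self prod_pow_diff_factor[OF assms(2)] ac_simps)
  moreover have "0 < (\<Prod>i<r. q ^ i)" using assms(1) by (simp add: prod_pos)
  ultimately show ?thesis using assms(1) by simp
qed

lemma gauss_binom_eqI:
  assumes "2 \<le> q" "N * q_factorial q r = (\<Prod>i<r. q ^ (s - i) - 1)"
  shows "gauss_binom q s r = N"
  using q_factorial_pos[OF assms(1), of r]
  unfolding gauss_binom_def q_factorial_def[symmetric] assms(2)[symmetric] by simp

lemma gauss_binom_q_factorial:
  assumes "2 \<le> q" "j \<le> n"
  shows "gauss_binom q n j = q_factorial q n div (q_factorial q j * q_factorial q (n - j))"
proof -
  have "(\<Prod>i<j. q ^ (n - i) - 1) = q_factorial q n div q_factorial q (n - j)"
    using prod_pow_diff_mult_q_factorial[OF assms(2), of q] q_factorial_pos[OF assms(1), of "n - j"]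
    by (metis nonzero_mult_div_cancel_right less_irrefl)
  then show ?thesis
    unfolding gauss_binom_def q_factorial_def[symmetric] by (simp add: div_mult2_eq[symmetric] mult.commute)
qed

lemma gauss_binom_symmetric:
  assumes "2 \<le> q" "j \<le> n"
  shows "gauss_binom q n (n - j) = gauss_binom q n j"
  using assms by (simp add: gauss_binom_q_factorial mult.commute)

lemma gauss_binom_pos:
  assumes "2 \<le> q" "r \<le> s"
  shows "0 < gauss_binom q s r"
proof -
  have "q ^ (r - i) - 1 \<le> q ^ (s - i) - 1" for i
    using assms by (intro diff_le_mono power_increasing) auto
  then have "(\<Prod>i<r. q ^ (r - i) - 1) \<le> (\<Prod>i<r. q ^ (s - i) - 1)"
    by (intro prod_mono) simp
  moreover have "(\<Prod>i<r. q ^ (r - i) - 1) = q_factorial q r"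
    using prod_pow_diff_mult_q_factorial[of r r q] by (simp add: q_factorial_def)
  ultimately show ?thesis
    using q_factorial_pos[OF assms(1), of r]
    unfolding gauss_binom_def q_factorial_def[symmetric] by (simp add: div_greater_zero_iff)
qed

section \<open>Counting subspaces of a vector space over a finite field\<close>

locale finite_field_vector_space = finite_dimensional_vector_space scale Basis
  for scale :: "'a::field \<Rightarrow> 'b::ab_group_add \<Rightarrow> 'b" and Basis +
  assumes finite_scalars: "finite (UNIV :: 'a set)"
begin

lemma card_span_independent:
  assumes "independent B"
  shows "card (span B) = CARD('a) ^ card B"
proof -
  have fin: "finite B" using assms by (rule finiteI_independent)
  let ?comb = "\<lambda>u. \<Sum>v\<in>B. scale (u v) v"
  have "span B = ?comb ` (B \<rightarrow>\<^sub>E UNIV)"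
  proof
    show "?comb ` (B \<rightarrow>\<^sub>E UNIV) \<subseteq> span B"
      by (auto simp: span_finite[OF fin])
    show "span B \<subseteq> ?comb ` (B \<rightarrow>\<^sub>E UNIV)"
    proof
      fix x assume "x \<in> span B"
      then obtain u where "x = ?comb u" by (auto simp: span_finite[OF fin])
      moreover have "?comb (restrict u B) = ?comb u" by (rule sum.cong) auto
      moreover have "restrict u B \<in> B \<rightarrow>\<^sub>E UNIV" by simp
      ultimately show "x \<in> ?comb ` (B \<rightarrow>\<^sub>E UNIV)" by (intro image_eqI[of _ _ "restrict u B"]) simp_all
    qed
  qed
  moreover have "inj_on ?comb (B \<rightarrow>\<^sub>E UNIV)"
  proof (rule inj_onI)
    fix u w assume u: "u \<in> B \<rightarrow>\<^sub>E UNIV" and w: "w \<in> B \<rightarrow>\<^sub>E UNIV" and eq: "?comb u = ?comb w"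
    have coeffs_zero: "\<forall>v\<in>B. c v = 0" if "(\<Sum>v\<in>B. scale (c v) v) = 0" for c
      using assms that by (auto simp: dependent_finite[OF fin])
    have "(\<Sum>v\<in>B. scale (u v - w v) v) = 0"
      using eq by (simp add: scale_left_diff_distrib sum_subtractf)
    then have "\<forall>v\<in>B. u v - w v = 0" by (rule coeffs_zero)
    then show "u = w" using u w by (intro PiE_ext) auto
  qed
  ultimately have "card (span B) = card (B \<rightarrow>\<^sub>E (UNIV :: 'a set))"
    by (simp add: card_image)
  also have "\<dots> = CARD('a) ^ card B" by (simp add: card_PiE fin)
  finally show ?thesis .
qed

lemma card_subspace:
  assumes "subspace S"
  shows "card S = CARD('a) ^ dim S"
proof -
  obtain B where "B \<subseteq> S" "independent B" "S \<subseteq> span B" "card B = dim S"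
    using basis_exists by blast
  moreover from this have "span B = S" using assms by (intro span_subspace)
  ultimately show ?thesis using card_span_independent[of B] by simp
qed

lemma card_scalars_ge_2: "2 \<le> CARD('a)"
proof -
  have "card {0 :: 'a, 1} \<le> CARD('a)" using finite_scalars by (intro card_mono) auto
  then show ?thesis by simp
qed

lemma finite_vectors [simp]: "finite (A :: 'b set)"
proof -
  have "card (UNIV :: 'b set) > 0"
    using card_subspace[OF subspace_UNIV] finite_scalars by (simp add: finite_UNIV_card_ge_0)
  then have "finite (UNIV :: 'b set)" by (rule card_ge_0_finite)
  then show ?thesis by (rule finite_subset[OF subset_UNIV])
qed

lemma finite_vector_sets [simp]: "finite (\<A> :: 'b set set)"
proof -
  have "finite (UNIV :: 'b set set)" using finite_vectors[of UNIV] by (metis Pow_UNIV finite_Pow_iff)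
  then show ?thesis by (rule finite_subset[OF subset_UNIV])
qed

lemma dim_Un_set_le: "dim (Y \<union> set ws) \<le> dim Y + length ws"
proof (induction ws)
  case Nil
  then show ?case by simp
next
  case (Cons w ws)
  have "dim (Y \<union> set (w # ws)) \<le> dim (Y \<union> set ws) + 1"
    by (simp add: dim_insert)
  then show ?case using Cons.IH by simp
qed

lemma dim_Un_Int:
  assumes "subspace Y" "subspace Z"
  shows "dim (Y \<union> Z) + dim (Y \<inter> Z) = dim Y + dim Z"
proof -
  have Y: "span Y = Y" and Z: "span Z = Z" using assms by simp_all
  have "span (Y \<union> Z) = {y + z |y z. y \<in> Y \<and> z \<in> Z}"
    using span_Un[of Y Z] unfolding Y Z .
  then have "dim (Y \<union> Z) = dim {y + z |y z. y \<in> Y \<and> z \<in> Z}"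
    by (metis dim_span)
  with dim_sums_Int[OF assms] show ?thesis by simp
qed

lemma dim_Un_span_absorb:
  assumes "V \<subseteq> Y"
  shows "dim (Y \<union> span (V \<union> S)) = dim (Y \<union> S)"
proof (rule span_eq_dim)
  have "span (V \<union> S) \<subseteq> span (Y \<union> S)"
    using assms by (intro span_mono) auto
  then have "Y \<union> span (V \<union> S) \<subseteq> span (Y \<union> S)"
    using span_superset[of "Y \<union> S"] by blast
  moreover have "Y \<union> S \<subseteq> span (Y \<union> span (V \<union> S))"
    using span_superset[of "V \<union> S"] span_superset[of "Y \<union> span (V \<union> S)"] by blast
  ultimately show "span (Y \<union> span (V \<union> S)) = span (Y \<union> S)"
    by (simp add: span_eq)
qed

definition indep_extensions :: "'b set \<Rightarrow> 'b set \<Rightarrow> nat \<Rightarrow> 'b list set" where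
  "indep_extensions Y A r = {ws. length ws = r \<and> set ws \<subseteq> A \<and> dim (Y \<union> set ws) = dim Y + r}"

lemma finite_indep_extensions: "finite (indep_extensions Y A r)"
proof (rule finite_subset)
  show "indep_extensions Y A r \<subseteq> {ws. set ws \<subseteq> UNIV \<and> length ws = r}"
    by (auto simp: indep_extensions_def)
  show "finite {ws. set ws \<subseteq> (UNIV :: 'b set) \<and> length ws = r}"
    by (rule finite_lists_length_eq) simp
qed

lemma indep_extensions_Suc:
  "indep_extensions Y A (Suc r) =
     (\<lambda>(ws, w). ws @ [w]) ` (SIGMA ws:indep_extensions Y A r. A - span (Y \<union> set ws))"
proof
  show "indep_extensions Y A (Suc r)
          \<subseteq> (\<lambda>(ws, w). ws @ [w]) ` (SIGMA ws:indep_extensions Y A r. A - span (Y \<union> set ws))"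
  proof
    fix vs assume vs: "vs \<in> indep_extensions Y A (Suc r)"
    then have "vs \<noteq> []" by (auto simp: indep_extensions_def)
    then obtain ws w where vs_eq: "vs = ws @ [w]" by (cases vs rule: rev_cases) auto
    have len: "length ws = r" using vs vs_eq by (simp add: indep_extensions_def)
    have "dim (insert w (Y \<union> set ws)) = dim Y + Suc r"
      using vs vs_eq by (simp add: indep_extensions_def)
    moreover have "dim (Y \<union> set ws) \<le> dim Y + r" using dim_Un_set_le[of Y ws] len by simp
    ultimately have "w \<notin> span (Y \<union> set ws) \<and> dim (Y \<union> set ws) = dim Y + r"
      unfolding dim_insert by (auto split: if_splits)
    then have "(ws, w) \<in> (SIGMA ws:indep_extensions Y A r. A - span (Y \<union> set ws))"
      using vs vs_eq len by (simp add: indep_extensions_def)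
    then show "vs \<in> (\<lambda>(ws, w). ws @ [w]) ` (SIGMA ws:indep_extensions Y A r. A - span (Y \<union> set ws))"
      using vs_eq by (intro image_eqI[of _ _ "(ws, w)"]) simp_all
  qed
  show "(\<lambda>(ws, w). ws @ [w]) ` (SIGMA ws:indep_extensions Y A r. A - span (Y \<union> set ws))
          \<subseteq> indep_extensions Y A (Suc r)"
    by (auto simp: indep_extensions_def dim_insert)
qed

lemma card_indep_extensions:
  assumes "subspace Y" "subspace A" "Y \<subseteq> A"
  shows "card (indep_extensions Y A r) = (\<Prod>i<r. CARD('a) ^ dim A - CARD('a) ^ (dim Y + i))"
proof (induction r)
  case 0
  have "indep_extensions Y A 0 = {[]}" by (auto simp: indep_extensions_def)
  then show ?case by simp
next
  case (Suc r)
  let ?choices = "\<lambda>ws. A - span (Y \<union> set ws)"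
  have card_choices: "card (?choices ws) = CARD('a) ^ dim A - CARD('a) ^ (dim Y + r)"
    if "ws \<in> indep_extensions Y A r" for ws
  proof -
    have "Y \<union> set ws \<subseteq> A" using that assms(3) by (auto simp: indep_extensions_def)
    then have "span (Y \<union> set ws) \<subseteq> A" using assms(2) by (rule span_minimal)
    moreover have "dim (Y \<union> set ws) = dim Y + r" using that by (simp add: indep_extensions_def)
    ultimately show ?thesis using assms by (simp add: card_Diff_subset card_subspace)
  qed
  have "inj_on (\<lambda>(ws, w). ws @ [w]) (SIGMA ws:indep_extensions Y A r. ?choices ws)"
    by (auto simp: inj_on_def)
  then have "card (indep_extensions Y A (Suc r)) = card (SIGMA ws:indep_extensions Y A r. ?choices ws)"
    by (simp add: indep_extensions_Suc card_image)
  also have "\<dots> = (\<Sum>ws\<in>indep_extensions Y A r. card (?choices ws))"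
    by (simp add: card_SigmaI finite_indep_extensions)
  also have "\<dots> = card (indep_extensions Y A r) * (CARD('a) ^ dim A - CARD('a) ^ (dim Y + r))"
    using card_choices by simp
  finally show ?case using Suc.IH by simp
qed

lemma span_indep_extension_meets:
  assumes "subspace V" "subspace Y" "subspace A" "V \<subseteq> Y" "Y \<subseteq> A"
    and ws: "ws \<in> indep_extensions Y A r"
  defines "Z \<equiv> span (V \<union> set ws)"
  shows "subspace Z \<and> V \<subseteq> Z \<and> Z \<subseteq> A \<and> dim Z = dim V + r \<and> Z \<inter> Y = V"
proof -
  have sub_Z: "subspace Z" unfolding Z_def by simp
  have V_Z: "V \<subseteq> Z" unfolding Z_def using span_superset[of "V \<union> set ws"] by blast
  have "V \<union> set ws \<subseteq> A" using ws assms(4,5) by (auto simp: indep_extensions_def)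
  then have Z_A: "Z \<subseteq> A" unfolding Z_def using assms(3) by (rule span_minimal)
  have dim_Z_le: "dim Z \<le> dim V + r"
    using dim_Un_set_le[of V ws] ws by (simp add: Z_def indep_extensions_def)
  have dim_Y_Z: "dim (Y \<union> Z) = dim Y + r"
    using dim_Un_span_absorb[OF assms(4)] ws by (simp add: Z_def indep_extensions_def)
  have "dim V \<le> dim (Y \<inter> Z)" using assms(4) V_Z by (intro dim_subset) auto
  with dim_Un_Int[OF assms(2) sub_Z] dim_Y_Z dim_Z_le
  have dim_Z: "dim Z = dim V + r" and "dim (Y \<inter> Z) \<le> dim V" by linarith+
  then have "V = Y \<inter> Z"
    using assms(1,2,4) sub_Z V_Z by (intro subspace_dim_equal) (auto intro: subspace_inter)
  with sub_Z V_Z Z_A dim_Z show ?thesis by blast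
qed

lemma indep_extensions_fibre:
  assumes "subspace Y" "V \<subseteq> Y"
    and Z: "subspace Z" "V \<subseteq> Z" "Z \<subseteq> A" "dim Z = dim V + r" "Z \<inter> Y = V"
  shows "{ws \<in> indep_extensions Y A r. span (V \<union> set ws) = Z} = indep_extensions V Z r"
proof
  show "{ws \<in> indep_extensions Y A r. span (V \<union> set ws) = Z} \<subseteq> indep_extensions V Z r"
  proof
    fix ws assume "ws \<in> {ws \<in> indep_extensions Y A r. span (V \<union> set ws) = Z}"
    then have ws: "ws \<in> indep_extensions Y A r" and Z_eq: "span (V \<union> set ws) = Z" by simp_all
    have "set ws \<subseteq> Z" using span_superset[of "V \<union> set ws"] Z_eq by blast
    moreover have "dim (V \<union> set ws) = dim V + r" using Z_eq Z(4) by (metis dim_span)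
    ultimately show "ws \<in> indep_extensions V Z r"
      using ws by (simp add: indep_extensions_def)
  qed
  show "indep_extensions V Z r \<subseteq> {ws \<in> indep_extensions Y A r. span (V \<union> set ws) = Z}"
  proof
    fix ws assume ws: "ws \<in> indep_extensions V Z r"
    have "span (V \<union> set ws) \<subseteq> Z"
      using ws Z(2,1) by (intro span_minimal) (auto simp: indep_extensions_def)
    moreover have "dim Z \<le> dim (span (V \<union> set ws))"
      using ws Z(4) by (simp add: indep_extensions_def)
    ultimately have Z_eq: "span (V \<union> set ws) = Z"
      using Z(1) by (intro subspace_dim_equal) auto
    have "dim (Y \<union> set ws) = dim (Y \<union> Z)"
      using dim_Un_span_absorb[OF assms(2), of "set ws"] Z_eq by simp
    also have "\<dots> = dim Y + r"
      using dim_Un_Int[OF assms(1) Z(1)] Z(4,5) by (simp add: Int_commute)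
    finally show "ws \<in> {ws \<in> indep_extensions Y A r. span (V \<union> set ws) = Z}"
      using ws Z_eq Z(3) by (auto simp: indep_extensions_def)
  qed
qed

lemma card_subspaces_meeting:
  assumes "subspace V" "subspace Y" "subspace A" "V \<subseteq> Y" "Y \<subseteq> A"
  shows "card {Z. subspace Z \<and> V \<subseteq> Z \<and> Z \<subseteq> A \<and> dim Z = dim V + r \<and> Z \<inter> Y = V}
           * (\<Prod>i<r. CARD('a) ^ (dim V + r) - CARD('a) ^ (dim V + i))
         = (\<Prod>i<r. CARD('a) ^ dim A - CARD('a) ^ (dim Y + i))"
proof -
  define T where "T = {Z. subspace Z \<and> V \<subseteq> Z \<and> Z \<subseteq> A \<and> dim Z = dim V + r \<and> Z \<inter> Y = V}"
  let ?fibre = "\<lambda>Z. {ws \<in> indep_extensions Y A r. span (V \<union> set ws) = Z}"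
  have partition: "indep_extensions Y A r = (\<Union>Z\<in>T. ?fibre Z)"
    using span_indep_extension_meets[OF assms] by (auto simp: T_def)
  have "card (indep_extensions Y A r) = (\<Sum>Z\<in>T. card (?fibre Z))"
    by (subst partition, rule card_UN_disjoint) (auto simp: finite_indep_extensions)
  also have "\<dots> = (\<Sum>Z\<in>T. card (indep_extensions V Z r))"
    using indep_extensions_fibre[OF assms(2,4)] by (intro sum.cong) (auto simp: T_def)
  also have "\<dots> = (\<Sum>Z\<in>T. \<Prod>i<r. CARD('a) ^ (dim V + r) - CARD('a) ^ (dim V + i))"
    using card_indep_extensions[OF assms(1)] by (intro sum.cong) (auto simp: T_def)
  finally show ?thesis
    using card_indep_extensions[OF assms(2,3,5)] by (simp add: T_def)
qed

lemma card_subspaces_between: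
  assumes "subspace V" "subspace A" "V \<subseteq> A" "dim V + r \<le> dim A"
  shows "card {Z. subspace Z \<and> V \<subseteq> Z \<and> Z \<subseteq> A \<and> dim Z = dim V + r}
           = gauss_binom CARD('a) (dim A - dim V) r"
proof -
  define s where "s = dim A - dim V"
  have dim_A: "dim A = dim V + s" and "r \<le> s" using assms(4) by (simp_all add: s_def)
  have "{Z. subspace Z \<and> V \<subseteq> Z \<and> Z \<subseteq> A \<and> dim Z = dim V + r}
      = {Z. subspace Z \<and> V \<subseteq> Z \<and> Z \<subseteq> A \<and> dim Z = dim V + r \<and> Z \<inter> V = V}"
    by auto
  then have "card {Z. subspace Z \<and> V \<subseteq> Z \<and> Z \<subseteq> A \<and> dim Z = dim V + r}
      * (\<Prod>i<r. CARD('a) ^ (dim V + r) - CARD('a) ^ (dim V + i))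
      = (\<Prod>i<r. CARD('a) ^ (dim V + s) - CARD('a) ^ (dim V + i))"
    using card_subspaces_meeting[OF assms(1,1,2) order_refl assms(3), of r] by (simp only: dim_A)
  then have "card {Z. subspace Z \<and> V \<subseteq> Z \<and> Z \<subseteq> A \<and> dim Z = dim V + r}
      * q_factorial CARD('a) r = (\<Prod>i<r. CARD('a) ^ (s - i) - 1)"
    by (rule q_binomial_from_prod_pow_diff[OF card_scalars_ge_2 \<open>r \<le> s\<close>])
  then show ?thesis unfolding s_def[symmetric] by (rule gauss_binom_eqI[OF card_scalars_ge_2, symmetric])
qed

definition grassmannian :: "nat \<Rightarrow> 'b set set" where
  "grassmannian j = {Z. subspace Z \<and> dim Z = j}"

lemma card_grassmannian_subspace:
  assumes "subspace U" "j \<le> dim U"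
  shows "card {V \<in> grassmannian j. V \<subseteq> U} = gauss_binom CARD('a) (dim U) j"
proof -
  have dim_0: "dim {0} = 0" by simp
  have "{V \<in> grassmannian j. V \<subseteq> U} = {Z. subspace Z \<and> {0} \<subseteq> Z \<and> Z \<subseteq> U \<and> dim Z = dim {0} + j}"
    by (auto simp: grassmannian_def subspace_0)
  then show ?thesis
    using card_subspaces_between[of "{0}" U j] assms by (simp add: subspace_0 dim_0)
qed

lemma card_grassmannian:
  assumes "j \<le> dim UNIV"
  shows "card (grassmannian j) = gauss_binom CARD('a) (dim UNIV) j"
  using card_grassmannian_subspace[OF subspace_UNIV, of j] assms by simp

lemma card_complements:
  assumes "subspace V" "subspace Y" "V \<subseteq> Y" "dim Y + r = dim UNIV"
  shows "card {Z. subspace Z \<and> V \<subseteq> Z \<and> dim Z = dim V + r \<and> Z \<inter> Y = V}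
           = CARD('a) ^ ((dim Y - dim V) * r)"
proof -
  define e where "e = dim Y - dim V"
  have dim_Y: "dim Y = e + dim V" using dim_subset[OF assms(3)] by (simp add: e_def)
  have dim_UNIV: "dim (UNIV :: 'b set) = e + dim V + r" using assms(4) dim_Y by simp
  have "{Z. subspace Z \<and> V \<subseteq> Z \<and> dim Z = dim V + r \<and> Z \<inter> Y = V}
      = {Z. subspace Z \<and> V \<subseteq> Z \<and> Z \<subseteq> UNIV \<and> dim Z = dim V + r \<and> Z \<inter> Y = V}"
    by simp
  then have "card {Z. subspace Z \<and> V \<subseteq> Z \<and> dim Z = dim V + r \<and> Z \<inter> Y = V}
      * (\<Prod>i<r. CARD('a) ^ (dim V + r) - CARD('a) ^ (dim V + i))
      = (\<Prod>i<r. CARD('a) ^ (e + dim V + r) - CARD('a) ^ (e + dim V + i))"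
    using card_subspaces_meeting[OF assms(1,2) subspace_UNIV assms(3) subset_UNIV, of r]
    by (simp only: dim_Y dim_UNIV add.assoc)
  then show ?thesis unfolding e_def[symmetric] by (rule q_power_from_prod_pow_diff[OF card_scalars_ge_2])
qed

section \<open>The subspace inclusion graph\<close>

definition subspace_inclusions :: "nat \<Rightarrow> nat \<Rightarrow> ('b set \<times> 'b set) set" where
  "subspace_inclusions t s = {(V, X). V \<in> grassmannian t \<and> X \<in> grassmannian s \<and> V \<subseteq> X}"

lemma finite_subspace_inclusions: "finite (subspace_inclusions t s)"
proof (rule finite_subset)
  show "subspace_inclusions t s \<subseteq> grassmannian t \<times> grassmannian s"
    by (auto simp: subspace_inclusions_def)
qed simp

lemma card_meeting_exactly:
  assumes "(V, X) \<in> subspace_inclusions t s" "s + u = t + dim UNIV"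
  shows "card {U \<in> grassmannian u. V \<subseteq> U \<and> U \<inter> X = V} = CARD('a) ^ ((s - t) * (u - t))"
proof -
  have V: "subspace V" "dim V = t" and X: "subspace X" "dim X = s" and "V \<subseteq> X"
    using assms(1) by (auto simp: subspace_inclusions_def grassmannian_def)
  have "dim X \<le> dim UNIV" by (rule dim_subset) simp
  then have "t \<le> u" and dim_X: "dim X + (u - t) = dim UNIV" using assms(2) X(2) by linarith+
  then have "{U \<in> grassmannian u. V \<subseteq> U \<and> U \<inter> X = V}
      = {U. subspace U \<and> V \<subseteq> U \<and> dim U = dim V + (u - t) \<and> U \<inter> X = V}"
    using V by (auto simp: grassmannian_def)
  then show ?thesis using card_complements[OF V(1) X(1) \<open>V \<subseteq> X\<close> dim_X] V X by simp
qed

lemma subspace_inclusions_caching_graph: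
  assumes "t + m \<le> dim UNIV"
  shows "caching_graph (gauss_binom CARD('a) (dim UNIV) t) (gauss_binom CARD('a) (dim UNIV) (m + t))
           (gauss_binom CARD('a) (dim UNIV - t) m)
           (grassmannian t) (grassmannian (m + t)) (subspace_inclusions t (m + t))"
  unfolding caching_graph_def
proof (intro conjI ballI)
  show "finite (grassmannian t)" "finite (grassmannian (m + t))" by simp_all
  show "card (grassmannian t) = gauss_binom CARD('a) (dim UNIV) t"
    "card (grassmannian (m + t)) = gauss_binom CARD('a) (dim UNIV) (m + t)"
    using assms by (simp_all add: card_grassmannian)
  show "subspace_inclusions t (m + t) \<subseteq> grassmannian t \<times> grassmannian (m + t)"
    by (auto simp: subspace_inclusions_def)
  fix V assume V: "V \<in> grassmannian t"
  then have "{X. (V, X) \<in> subspace_inclusions t (m + t)}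
      = {Z. subspace Z \<and> V \<subseteq> Z \<and> Z \<subseteq> UNIV \<and> dim Z = dim V + m}"
    by (auto simp: subspace_inclusions_def grassmannian_def)
  then show "card {X. (V, X) \<in> subspace_inclusions t (m + t)} = gauss_binom CARD('a) (dim UNIV - t) m"
    using card_subspaces_between[of V UNIV m] V assms by (simp add: grassmannian_def)
qed

lemma induced_matching_meeting:
  assumes "C \<subseteq> subspace_inclusions t s" "inj_on fst C" "\<And>V X. (V, X) \<in> C \<Longrightarrow> X \<inter> U = V"
  shows "induced_matching (subspace_inclusions t s) C"
  unfolding induced_matching_def
proof (intro conjI allI impI)
  show "C \<subseteq> subspace_inclusions t s" by (rule assms(1))
  fix V1 X1 V2 X2 assume in1: "(V1, X1) \<in> C" and in2: "(V2, X2) \<in> C" and "(V1, X1) \<noteq> (V2, X2)"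
  show V_ne: "V1 \<noteq> V2"
  proof
    assume "V1 = V2"
    then have "(V1, X1) = (V2, X2)" using inj_onD[OF assms(2) _ in1 in2] by simp
    with \<open>(V1, X1) \<noteq> (V2, X2)\<close> show False by contradiction
  qed
  then show "X1 \<noteq> X2" using assms(3)[OF in1] assms(3)[OF in2] by auto
  have equal_if_sub: "V = V'" if "V \<subseteq> V'" "(V, X) \<in> C" "(V', X') \<in> C" for V V' X X'
  proof -
    have "(V, X) \<in> subspace_inclusions t s" "(V', X') \<in> subspace_inclusions t s"
      using that(2,3) assms(1) by auto
    then have "subspace V" "subspace V'" "dim V' \<le> dim V"
      by (simp_all add: subspace_inclusions_def grassmannian_def)
    then show ?thesis using subspace_dim_equal that(1) by blast
  qed
  have "V1 \<subseteq> V2" if "V1 \<subseteq> X2" using that assms(3)[OF in1] assms(3)[OF in2] by blast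
  then show "(V1, X2) \<notin> subspace_inclusions t s"
    using V_ne equal_if_sub[OF _ in1 in2] by (auto simp: subspace_inclusions_def)
  have "V2 \<subseteq> V1" if "V2 \<subseteq> X1" using that assms(3)[OF in1] assms(3)[OF in2] by blast
  then show "(V2, X1) \<notin> subspace_inclusions t s"
    using V_ne equal_if_sub[OF _ in2 in1] by (auto simp: subspace_inclusions_def)
qed

lemma subspace_inclusions_perfect_matching:
  assumes "t + m \<le> dim UNIV"
  obtains f where "bij_betw f (subspace_inclusions t (m + t)) (subspace_inclusions t (dim UNIV - m))"
    and "\<And>e. e \<in> subspace_inclusions t (m + t) \<Longrightarrow> fst (f e) = fst e \<and> snd (f e) \<inter> snd e = fst e"
proof -
  let ?E = "subspace_inclusions t (m + t)" and ?P = "subspace_inclusions t (dim UNIV - m)"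
  let ?N = "\<lambda>e. {fst e} \<times> {U \<in> grassmannian (dim UNIV - m). fst e \<subseteq> U \<and> U \<inter> snd e = fst e}"
  define c where "c = CARD('a) ^ (m * (dim (UNIV :: 'b set) - m - t))"
  have "\<exists>f. bij_betw f ?E ?P \<and> (\<forall>e\<in>?E. f e \<in> ?N e)"
  proof (rule biregular_perfect_matching[where c = c])
    show "finite ?E" "finite ?P" by (simp_all add: finite_subspace_inclusions)
    show "?N e \<subseteq> ?P" if "e \<in> ?E" for e
      using that by (auto simp: subspace_inclusions_def)
    show "card (?N e) = c" if "e \<in> ?E" for e
      using card_meeting_exactly[of "fst e" "snd e" t "m + t" "dim UNIV - m"] that assms
      by (simp add: card_cartesian_product c_def)
    show "card {e \<in> ?E. p \<in> ?N e} = c" if "p \<in> ?P" for p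
    proof -
      have "{e \<in> ?E. p \<in> ?N e}
          = {fst p} \<times> {X \<in> grassmannian (m + t). fst p \<subseteq> X \<and> X \<inter> snd p = fst p}"
      proof (rule set_eqI)
        fix e :: "'b set \<times> 'b set"
        show "e \<in> {e \<in> ?E. p \<in> ?N e}
            \<longleftrightarrow> e \<in> {fst p} \<times> {X \<in> grassmannian (m + t). fst p \<subseteq> X \<and> X \<inter> snd p = fst p}"
          using that by (cases e, cases p) (auto simp: subspace_inclusions_def Int_commute)
      qed
      then show ?thesis
        using card_meeting_exactly[of "fst p" "snd p" t "dim UNIV - m" "m + t"] that assms
        by (simp add: card_cartesian_product c_def mult.commute)
    qed
    show "0 < c" using finite_scalars by (simp add: c_def finite_UNIV_card_ge_0)
  qed
  then obtain f where f_bij: "bij_betw f ?E ?P" and f_N: "\<forall>e\<in>?E. f e \<in> ?N e" by blast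
  have "fst (f e) = fst e \<and> snd (f e) \<inter> snd e = fst e" if "e \<in> ?E" for e
    using f_N that by (simp add: mem_Times_iff)
  with f_bij show ?thesis by (rule that)
qed

lemma subspace_inclusions_matching_cover:
  assumes "t + m \<le> dim UNIV"
  shows "\<exists>Cs. induced_matching_cover (subspace_inclusions t (m + t)) Cs
           \<and> card Cs = gauss_binom CARD('a) (dim UNIV) m
           \<and> (\<forall>C\<in>Cs. card C = gauss_binom CARD('a) (dim UNIV - m) t)"
proof -
  let ?E = "subspace_inclusions t (m + t)" and ?P = "subspace_inclusions t (dim UNIV - m)"
  let ?Us = "grassmannian (dim UNIV - m)"
  obtain f where f_bij: "bij_betw f ?E ?P"
    and f_meets: "\<And>e. e \<in> ?E \<Longrightarrow> fst (f e) = fst e \<and> snd (f e) \<inter> snd e = fst e"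
    using subspace_inclusions_perfect_matching[OF assms] by blast
  let ?C = "\<lambda>U. {e \<in> ?E. snd (f e) = U}"
  have card_C: "card (?C U) = gauss_binom CARD('a) (dim UNIV - m) t" if "U \<in> ?Us" for U
  proof -
    have "{p \<in> ?P. snd p = U} = {V \<in> grassmannian t. V \<subseteq> U} \<times> {U}"
      using that by (auto simp: subspace_inclusions_def)
    then have "card (?C U) = card ({V \<in> grassmannian t. V \<subseteq> U} \<times> {U})"
      using card_fibre_bij_betw[OF f_bij, of snd U] by simp
    then show ?thesis using card_grassmannian_subspace[of U t] that assms
      by (simp add: card_cartesian_product grassmannian_def)
  qed
  have "induced_matching ?E (?C U) \<and> ?C U \<noteq> {}" if "U \<in> ?Us" for U
  proof
    have "inj_on fst (?C U)"
    proof (rule inj_onI)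
      fix e e' assume "e \<in> ?C U" "e' \<in> ?C U" "fst e = fst e'"
      then have "f e = f e'" using f_meets[of e] f_meets[of e'] by (simp add: prod_eq_iff)
      with \<open>e \<in> ?C U\<close> \<open>e' \<in> ?C U\<close> show "e = e'"
        using bij_betw_imp_inj_on[OF f_bij] by (auto dest: inj_onD)
    qed
    moreover have "X \<inter> U = V" if "(V, X) \<in> ?C U" for V X
      using f_meets[of "(V, X)"] that by (auto simp: Int_commute)
    ultimately show "induced_matching ?E (?C U)" by (intro induced_matching_meeting[where U = U]) auto
    have "0 < gauss_binom CARD('a) (dim UNIV - m) t"
      using assms by (intro gauss_binom_pos card_scalars_ge_2) simp
    then show "?C U \<noteq> {}" using card_C[OF that] by (metis card.empty less_irrefl)
  qed
  moreover have "snd (f e) \<in> ?Us" if "e \<in> ?E" for e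
    using bij_betw_apply[OF f_bij that] by (auto simp: subspace_inclusions_def)
  ultimately have "induced_matching_cover ?E (?C ` ?Us)" and "card (?C ` ?Us) = card ?Us"
    using induced_matching_cover_fibres[of "\<lambda>e. snd (f e)" ?E ?Us] by blast+
  moreover have "card ?Us = gauss_binom CARD('a) (dim UNIV) m"
    using assms card_grassmannian[of "dim UNIV - m"] gauss_binom_symmetric[OF card_scalars_ge_2]
    by simp
  ultimately show ?thesis using card_C by auto
qed

end

interpretation vec: finite_field_vector_space "(*s) :: 'a::{field,finite} \<Rightarrow> 'a ^ 'n \<Rightarrow> 'a ^ 'n" cart_basis
  by unfold_locales simp

theorem theorem2:
  fixes q t m :: nat
    and Vs Xs :: "('a::{field,finite} ^ 'n) set set"
    and E :: "(('a ^ 'n) set \<times> ('a ^ 'n) set) set"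
  assumes "CARD('a) = q"
    and "0 < t" and "0 < m" and "m + t \<le> CARD('n)"
    and "Vs = {V. vec.subspace V \<and> vec.dim V = t}"
    and "Xs = {X. vec.subspace X \<and> vec.dim X = m + t}"
    and "E = {(V, X). V \<in> Vs \<and> X \<in> Xs \<and> V \<subseteq> X}"
  shows "caching_graph (gauss_binom q CARD('n) t) (gauss_binom q CARD('n) (m + t))
           (gauss_binom q (CARD('n) - t) m) Vs Xs E
       \<and> (\<exists>Cs. induced_matching_cover E Cs
              \<and> card Cs = gauss_binom q CARD('n) m
              \<and> (\<forall>C\<in>Cs. card C = gauss_binom q (CARD('n) - m) t))
       \<and> cache_fraction (gauss_binom q CARD('n) (m + t)) (gauss_binom q (CARD('n) - t) m)
           = 1 - real (gauss_binom q (CARD('n) - t) m) / real (gauss_binom q CARD('n) (m + t))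
       \<and> scheme_rate (gauss_binom q CARD('n) (m + t)) (gauss_binom q CARD('n) m)
           = real (gauss_binom q CARD('n) m) / real (gauss_binom q CARD('n) (m + t))
       \<and> caching_gain (gauss_binom q CARD('n) t) (gauss_binom q CARD('n) (m + t))
           (gauss_binom q (CARD('n) - t) m) (gauss_binom q CARD('n) m)
           = real (gauss_binom q (CARD('n) - m) t)"
proof -
  let ?n = "CARD('n)"
  have q: "CARD('a) = q" "2 \<le> q" using assms(1) vec.card_scalars_ge_2 by auto
  have sets: "Vs = vec.grassmannian t" "Xs = vec.grassmannian (m + t)"
    "E = vec.subspace_inclusions t (m + t)"
    using assms(5-7) by (simp_all add: vec.grassmannian_def vec.subspace_inclusions_def)
  have graph: "caching_graph (gauss_binom q ?n t) (gauss_binom q ?n (m + t))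
      (gauss_binom q (?n - t) m) Vs Xs E"
    using vec.subspace_inclusions_caching_graph[where 'a = 'a and 'n = 'n, of t m] assms(4)
    by (simp add: card_cart_basis q sets)
  obtain Cs where cover: "induced_matching_cover E Cs" and "card Cs = gauss_binom q ?n m"
    and "\<forall>C\<in>Cs. card C = gauss_binom q (?n - m) t"
    using vec.subspace_inclusions_matching_cover[where 'a = 'a and 'n = 'n, of t m] assms(4)
    by (auto simp: card_cart_basis q sets)
  moreover have "0 < gauss_binom q ?n (m + t)" "0 < gauss_binom q ?n m"
    using assms(4) q(2) by (simp_all add: gauss_binom_pos)
  ultimately have "caching_gain (gauss_binom q ?n t) (gauss_binom q ?n (m + t))
      (gauss_binom q (?n - t) m) (gauss_binom q ?n m) = gauss_binom q (?n - m) t"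
    using graph by (intro caching_gain_of_cover) auto
  with graph cover \<open>card Cs = _\<close> \<open>\<forall>C\<in>Cs. _\<close> show ?thesis
    by (auto simp: cache_fraction_def scheme_rate_def)
qed

end
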